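(* Let $({\bm w}_j^0)_{j\ge1}$ be a sequence of i.i.d. random variables with law $\pi_0$, and let $f^*$ be a continuous function on $X$. Assume there exist a constant $C$ and a sequence of real numbers $(a_j)_{j\ge1}$ with $\sup_j|a_j|\le C$ such that \[ \lim_{m\to\infty}\frac1m\sum_{j=1}^m a_j\phi({\bm x};{\bm w}_j^0)=f^*({\bm x})\quad\text{for all }{\bm x}\in X. \] Then, with probability $1$ (over the sequence $({\bm w}_j^0)$), there exists a measurable function $a^*:\Omega\to\mathbb{R}$ with $|a^*({\bm w})|\le C$ for $\pi_0$-a.e. ${\bm w}$ such that \[ f^*({\bm x})=\int_\Omega a^*({\bm w})\phi({\bm x};{\bm w})\,d\pi_0({\bm w})\quad\text{for all }{\bm x}\in X. \] In particular $\|f^*\|_\infty\le C$.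
   Context: $X=[0,1]^d$; $\Omega\subset\mathbb{R}^p$ is compact; $\pi_0$ is a probability distribution with support $\Omega$; $\phi:X\times\Omega\to\mathbb{R}$ is continuous and bounded. For a function $f$ on $X$, $\|f\|_\infty:=\inf\{\|a\|_{L^\infty(\pi_0)}: f({\bm x})=\int a({\bm w})\phi({\bm x};{\bm w})d\pi_0({\bm w})\ \forall{\bm x}\in X\}$. *)

theory Defs
  imports "HOL-Probability.Probability"
begin

text \<open>The input domain X = [0,1]^d, with d given by the finite index type 'd.\<close>
definition unit_cube :: "(real ^ 'd) set" where
  "unit_cube = {x. \<forall>i. 0 \<le> x $ i \<and> x $ i \<le> 1}"

definition measure_support :: "'a::metric_space measure \<Rightarrow> 'a set" where
  "measure_support \<mu> = {w. \<forall>e>0. emeasure \<mu> (ball w e) > 0}"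

definition rf_norm ::
  "'p measure \<Rightarrow> 'p set \<Rightarrow> ('x \<Rightarrow> 'p \<Rightarrow> real) \<Rightarrow> 'x set \<Rightarrow> ('x \<Rightarrow> real) \<Rightarrow> ereal" where
  "rf_norm \<pi>0 \<Omega> \<phi> X f =
     Inf {esssup \<pi>0 (\<lambda>w. ereal \<bar>a w\<bar>) | a.
            a \<in> borel_measurable \<pi>0 \<and> (\<forall>x\<in>X. f x = (LINT w:\<Omega>|\<pi>0. a w * \<phi> x w))}"

end

theory Submission
  imports Defs "HOL-Library.Diagonal_Subsequence"
begin

(* Fix a sample path on which every w_j lies in Omega and, for each of the countably many dyadic
   cells Q of Omega, the empirical frequency of Q tends to pi0(Q); by the strong law of large
   numbers (Hoeffding's inequality plus Borel-Cantelli) this happens almost surely.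
   Given weights with |a_j| <= C, a diagonal subsequence makes the weighted empirical masses
   (1/m) sum_j a_j 1_Q(w_j) converge for every cell Q, to a finitely additive nu with
   |nu(Q)| <= C pi0(Q). The step densities nu(Q)/pi0(Q) on the cells of generation n form a
   martingale bounded by C, so their L2 norms increase to a finite limit; hence the densities
   are Cauchy in L2 and a subsequence converges almost everywhere to some a* with |a*| <= C
   and integral of a* over Q equal to nu(Q) for every cell. Approximating phi(x, .) uniformly by
   step functions on dyadic cells finally identifies f*(x) with the pi0-integral of a* phi(x, .). *)

section \<open>Strong law of large numbers for bounded observables\<close>

definition prefix_mean :: "(nat \<Rightarrow> real) \<Rightarrow> nat \<Rightarrow> real" where
  "prefix_mean x m = (1 / real m) * (\<Sum>j=1..m. x j)"

lemma prefix_mean_cmult: "prefix_mean (\<lambda>j. c * x j) m = c * prefix_mean x m"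
  by (simp add: prefix_mean_def sum_distrib_left)

lemma prefix_mean_diff: "prefix_mean (\<lambda>j. x j - y j) m = prefix_mean x m - prefix_mean y m"
  by (simp add: prefix_mean_def sum_subtractf right_diff_distrib)

lemma prefix_mean_sum: "prefix_mean (\<lambda>j. \<Sum>k\<in>K. x k j) m = (\<Sum>k\<in>K. prefix_mean (x k) m)"
  unfolding prefix_mean_def sum_distrib_left by (rule sum.swap)

lemma abs_prefix_mean_le:
  assumes "\<And>j. j \<ge> 1 \<Longrightarrow> \<bar>x j\<bar> \<le> y j"
  shows "\<bar>prefix_mean x m\<bar> \<le> prefix_mean y m"
proof -
  have "\<bar>\<Sum>j=1..m. x j\<bar> \<le> (\<Sum>j=1..m. y j)"
    using assms by (intro order.trans[OF sum_abs sum_mono]) auto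
  then show ?thesis by (simp add: prefix_mean_def abs_mult divide_right_mono)
qed

lemma prefix_mean_const_le: "0 \<le> c \<Longrightarrow> prefix_mean (\<lambda>_. c) m \<le> c"
  by (cases "m = 0") (simp_all add: prefix_mean_def)

lemma (in prob_space) sample_sum_deviation_prob:
  fixes W :: "nat \<Rightarrow> 'a \<Rightarrow> 'b::topological_space" and g :: "'b \<Rightarrow> real"
  assumes W: "\<And>j. j \<ge> 1 \<Longrightarrow> W j \<in> M \<rightarrow>\<^sub>M borel"
    and indep: "indep_vars (\<lambda>_. borel) W {1..}"
    and distr: "\<And>j. j \<ge> 1 \<Longrightarrow> distr M borel (W j) = \<mu>"
    and g: "g \<in> borel_measurable borel" "\<And>x. \<bar>g x\<bar> \<le> B" "B > 0"
    and "e > 0" "m \<ge> 1"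
  shows "prob {\<omega> \<in> space M. real m * e \<le> \<bar>(\<Sum>j=1..m. g (W j \<omega>)) - real m * integral\<^sup>L \<mu> g\<bar>}
           \<le> 2 * exp (- (e\<^sup>2 / (2 * B\<^sup>2))) ^ m"
proof -
  interpret Hoeffding_ineq M "{1..m}" "\<lambda>j \<omega>. g (W j \<omega>)" "\<lambda>_. -B" "\<lambda>_. B"
    "\<Sum>j\<in>{1..m}. expectation (\<lambda>\<omega>. g (W j \<omega>))"
  proof unfold_locales
    show "finite {1..m}" by simp
    show "indep_vars (\<lambda>_. borel) (\<lambda>j \<omega>. g (W j \<omega>)) {1..m}"
      by (rule indep_vars_subset[OF indep_vars_compose2[OF indep, of "\<lambda>_. g" "\<lambda>_. borel"]])
         (use g in auto)
    show "AE \<omega> in M. g (W j \<omega>) \<in> {-B..B}" for j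
      using g(2) by (intro AE_I2) (simp add: abs_le_iff minus_le_iff)
  qed simp
  have "expectation (\<lambda>\<omega>. g (W j \<omega>)) = integral\<^sup>L \<mu> g" if "j \<ge> 1" for j
    using integral_distr[OF W[OF that] g(1)] distr[OF that] by simp
  then have mean: "(\<Sum>j\<in>{1..m}. expectation (\<lambda>\<omega>. g (W j \<omega>))) = real m * integral\<^sup>L \<mu> g"
    by simp
  have range: "(\<Sum>j\<in>{1..m}. (B - - B)\<^sup>2) = real m * (4 * B\<^sup>2)"
    by (simp add: power2_eq_square algebra_simps)
  have "prob {\<omega> \<in> space M. real m * e \<le> \<bar>(\<Sum>j=1..m. g (W j \<omega>)) - real m * integral\<^sup>L \<mu> g\<bar>}
        \<le> 2 * exp (-2 * (real m * e)\<^sup>2 / (real m * (4 * B\<^sup>2)))"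
    using Hoeffding_ineq_abs_ge[of "real m * e"] assms unfolding mean range by simp
  also have "-2 * (real m * e)\<^sup>2 / (real m * (4 * B\<^sup>2)) = real m * (- (e\<^sup>2 / (2 * B\<^sup>2)))"
    using assms by (simp add: power2_eq_square field_simps)
  also have "exp \<dots> = exp (- (e\<^sup>2 / (2 * B\<^sup>2))) ^ m"
    by (rule exp_of_nat_mult)
  finally show ?thesis .
qed

lemma (in prob_space) sample_mean_eventually_close:
  fixes W :: "nat \<Rightarrow> 'a \<Rightarrow> 'b::topological_space" and g :: "'b \<Rightarrow> real"
  assumes W: "\<And>j. j \<ge> 1 \<Longrightarrow> W j \<in> M \<rightarrow>\<^sub>M borel"
    and indep: "indep_vars (\<lambda>_. borel) W {1..}"
    and distr: "\<And>j. j \<ge> 1 \<Longrightarrow> distr M borel (W j) = \<mu>"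
    and g: "g \<in> borel_measurable borel" "\<And>x. \<bar>g x\<bar> \<le> B" "B > 0"
    and e: "e > 0"
  shows "AE \<omega> in M. eventually
           (\<lambda>m. \<bar>prefix_mean (\<lambda>j. g (W j \<omega>)) m - integral\<^sup>L \<mu> g\<bar> < e) sequentially"
proof -
  define q where "q = exp (- (e\<^sup>2 / (2 * B\<^sup>2)))"
  have q: "0 \<le> q" "q < 1"
    using e g(3) by (auto simp: q_def)
  define A where "A m = {\<omega> \<in> space M. m \<ge> 1 \<and>
    real m * e \<le> \<bar>(\<Sum>j=1..m. g (W j \<omega>)) - real m * integral\<^sup>L \<mu> g\<bar>}" for m
  have A_sets: "A m \<in> sets M" for m
  proof -
    have "(\<lambda>\<omega>. g (W j \<omega>)) \<in> borel_measurable M" if "j \<ge> 1" for j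
      using measurable_comp[OF W[OF that] g(1)] by (simp add: o_def)
    then have "(\<lambda>\<omega>. \<Sum>j=1..m. g (W j \<omega>)) \<in> borel_measurable M"
      by (intro borel_measurable_sum) auto
    then show ?thesis unfolding A_def by measurable
  qed
  have A_prob: "prob (A m) \<le> 2 * q ^ m" for m
  proof (cases "m \<ge> 1")
    case True
    then show ?thesis
      using sample_sum_deviation_prob[OF W indep distr g e True] by (simp add: A_def q_def)
  next
    case False
    then have "A m = {}" by (auto simp: A_def)
    then show ?thesis using q by simp
  qed
  have "summable (\<lambda>m. measure M (A m))"
    \<comment> \<open>Hoeffding's bound is geometric in m, so Borel-Cantelli applies.\<close>
  proof (rule summable_comparison_test')
    show "summable (\<lambda>m. 2 * q ^ m)"
      using q by (intro summable_mult summable_geometric) auto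
    show "norm (measure M (A m)) \<le> 2 * q ^ m" for m
      using A_prob[of m] by simp
  qed
  then have "AE \<omega> in M. eventually (\<lambda>m. \<omega> \<in> space M - A m) sequentially"
    by (intro borel_cantelli_AE1) (simp_all add: A_sets less_top[symmetric])
  then show ?thesis
  proof eventually_elim
    case (elim \<omega>)
    with eventually_ge_at_top[of 1] show ?case
    proof eventually_elim
      case (elim m)
      then have m: "real m > 0" and
        "\<bar>(\<Sum>j=1..m. g (W j \<omega>)) - real m * integral\<^sup>L \<mu> g\<bar> < real m * e"
        by (auto simp: A_def)
      moreover have "prefix_mean (\<lambda>j. g (W j \<omega>)) m - integral\<^sup>L \<mu> g
          = ((\<Sum>j=1..m. g (W j \<omega>)) - real m * integral\<^sup>L \<mu> g) / real m"
        using m by (simp add: prefix_mean_def diff_divide_distrib)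
      ultimately show ?case
        by (simp add: pos_divide_less_eq mult.commute)
    qed
  qed
qed

lemma (in prob_space) strong_law_bounded:
  fixes W :: "nat \<Rightarrow> 'a \<Rightarrow> 'b::topological_space" and g :: "'b \<Rightarrow> real"
  assumes "\<And>j. j \<ge> 1 \<Longrightarrow> W j \<in> M \<rightarrow>\<^sub>M borel"
    and "indep_vars (\<lambda>_. borel) W {1..}"
    and "\<And>j. j \<ge> 1 \<Longrightarrow> distr M borel (W j) = \<mu>"
    and "g \<in> borel_measurable borel" "\<And>x. \<bar>g x\<bar> \<le> B" "B > 0"
  shows "AE \<omega> in M. prefix_mean (\<lambda>j. g (W j \<omega>)) \<longlonglongrightarrow> integral\<^sup>L \<mu> g"
proof -
  have "AE \<omega> in M. \<forall>k::nat. eventually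
          (\<lambda>m. \<bar>prefix_mean (\<lambda>j. g (W j \<omega>)) m - integral\<^sup>L \<mu> g\<bar> < 1 / Suc k) sequentially"
    unfolding AE_all_countable by (intro allI sample_mean_eventually_close[OF assms]) (auto simp del: of_nat_Suc)
  then show ?thesis
  proof eventually_elim
    case (elim \<omega>)
    show ?case
      unfolding tendsto_iff dist_real_def
    proof (intro allI impI)
      fix r :: real assume "r > 0"
      then obtain k :: nat where "1 / Suc k < r"
        using nat_approx_posE by blast
      with elim[rule_format, of k]
      show "eventually (\<lambda>m. \<bar>prefix_mean (\<lambda>j. g (W j \<omega>)) m - integral\<^sup>L \<mu> g\<bar> < r) sequentially"
        by (elim eventually_mono) simp
    qed
  qed
qed

lemma AE_samples_in:
  fixes W :: "nat \<Rightarrow> 'a \<Rightarrow> 'b::topological_space"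
  assumes "\<And>j. j \<ge> 1 \<Longrightarrow> W j \<in> M \<rightarrow>\<^sub>M borel" "\<And>j. j \<ge> 1 \<Longrightarrow> distr M borel (W j) = \<mu>"
    and "AE v in \<mu>. v \<in> S"
  shows "AE \<omega> in M. \<forall>j\<ge>1. W j \<omega> \<in> S"
  unfolding AE_all_countable
proof
  fix j :: nat
  show "AE \<omega> in M. j \<ge> 1 \<longrightarrow> W j \<omega> \<in> S"
  proof (cases "j \<ge> 1")
    case True
    have "AE v in distr M borel (W j). v \<in> S"
      unfolding assms(2)[OF True] by (rule assms(3))
    from AE_distrD[OF assms(1)[OF True] this] show ?thesis by simp
  qed simp
qed

lemma AE_in_measure_support:
  fixes \<mu> :: "'a::{metric_space,second_countable_topology} measure"
  assumes "sets \<mu> = sets borel"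
  shows "AE w in \<mu>. w \<in> measure_support \<mu>"
proof -
  define F where "F = {ball w e | w e. e > 0 \<and> emeasure \<mu> (ball w e) = 0}"
  obtain F' where F': "F' \<subseteq> F" "countable F'" "\<Union>F' = \<Union>F"
    using Lindelof[of F] by (auto simp: F_def)
  have "\<Union>F' \<in> null_sets \<mu>"
  proof -
    have "S \<in> null_sets \<mu>" if S: "S \<in> F'" for S
    proof -
      obtain w e where "S = ball w e" "emeasure \<mu> (ball w e) = 0"
        using S F'(1) by (auto simp: F_def)
      moreover have "ball w e \<in> sets \<mu>" using assms by simp
      ultimately show ?thesis by auto
    qed
    then show ?thesis
      using null_sets_UN'[OF F'(2), of id] by simp
  qed
  moreover have "{w \<in> space \<mu>. w \<notin> measure_support \<mu>} \<subseteq> \<Union>F'"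
  proof
    fix w assume "w \<in> {w \<in> space \<mu>. w \<notin> measure_support \<mu>}"
    then obtain e where "e > 0" "emeasure \<mu> (ball w e) = 0"
      by (auto simp: measure_support_def)
    then show "w \<in> \<Union>F'"
      unfolding F'(3) F_def by (auto intro!: exI[of _ "ball w e"])
  qed
  ultimately show ?thesis by (intro AE_I[where N="\<Union>F'"]) auto
qed

section \<open>Dyadic cells\<close>

definition dyadic_index :: "nat \<Rightarrow> real^'n \<Rightarrow> int^'n" where
  "dyadic_index n v = (\<chi> i. \<lfloor>2^n * v$i\<rfloor>)"

definition dyadic_cell :: "(real^'n) set \<Rightarrow> nat \<Rightarrow> int^'n \<Rightarrow> (real^'n) set" where
  "dyadic_cell S n k = {v \<in> S. dyadic_index n v = k}"

lemma floor_two_power_mult_div: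
  fixes t :: real
  assumes "n \<le> n'"
  shows "\<lfloor>2^n * t\<rfloor> = \<lfloor>2^n' * t\<rfloor> div 2^(n' - n)"
proof -
  have "(2::real)^n' = 2^n * 2^(n' - n)"
    using assms by (simp flip: power_add)
  then have "\<lfloor>(2::real)^n * t\<rfloor> = \<lfloor>2^n' * t / real_of_int (2^(n' - n))\<rfloor>"
    by simp
  also have "\<dots> = \<lfloor>2^n' * t\<rfloor> div 2^(n' - n)"
    by (rule floor_divide_real_eq_div) simp
  finally show ?thesis .
qed

lemma dyadic_index_coarsen:
  assumes "n \<le> n'" "dyadic_index n' v = dyadic_index n' u"
  shows "dyadic_index n v = dyadic_index n u"
proof -
  have "\<lfloor>2^n' * v$i\<rfloor> = \<lfloor>2^n' * u$i\<rfloor>" for i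
    using assms(2) by (metis dyadic_index_def vec_lambda_beta)
  then show ?thesis
    unfolding dyadic_index_def by (simp add: floor_two_power_mult_div[OF assms(1)])
qed

lemma dist_le_if_dyadic_index_eq:
  fixes v u :: "real^'n"
  assumes "dyadic_index n v = dyadic_index n u"
  shows "dist v u \<le> real CARD('n) / 2^n"
proof -
  have "\<bar>v$i - u$i\<bar> \<le> 1 / 2^n" for i
  proof -
    have "\<lfloor>2^n * v$i\<rfloor> = \<lfloor>2^n * u$i\<rfloor>"
      using assms by (metis dyadic_index_def vec_lambda_beta)
    then have "\<bar>2^n * v$i - 2^n * u$i\<bar> < 1"
      using floor_correct[of "2^n * v$i"] floor_correct[of "2^n * u$i"] by linarith
    then have "2^n * \<bar>v$i - u$i\<bar> < 1"
      by (simp add: abs_mult flip: right_diff_distrib)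
    then show ?thesis by (simp add: field_simps)
  qed
  then have "(\<Sum>i\<in>UNIV. \<bar>(v - u)$i\<bar>) \<le> (\<Sum>i\<in>(UNIV::'n set). 1 / 2^n)"
    by (intro sum_mono) simp
  then show ?thesis
    using norm_le_l1_cart[of "v - u"] by (simp add: dist_norm)
qed

lemma finite_dyadic_index_image:
  fixes S :: "(real^'n) set"
  assumes "bounded S"
  shows "finite (dyadic_index n ` S)"
proof -
  obtain R where R: "\<And>v. v \<in> S \<Longrightarrow> norm v \<le> R"
    using assms by (auto simp: bounded_iff)
  define L where "L = \<lceil>2^n * R\<rceil>"
  have "dyadic_index n ` S \<subseteq> vec_lambda ` (Pi\<^sub>E UNIV (\<lambda>_. {-L..L}))"
  proof
    fix k assume "k \<in> dyadic_index n ` S"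
    then obtain v where v: "v \<in> S" "k = dyadic_index n v" by auto
    have "-L \<le> \<lfloor>2^n * v$i\<rfloor> \<and> \<lfloor>2^n * v$i\<rfloor> \<le> L" for i
    proof -
      have "\<bar>v$i\<bar> \<le> R"
        using component_le_norm_cart[of v i] R[OF v(1)] by linarith
      then have "\<bar>2^n * v$i\<bar> \<le> 2^n * R"
        by (simp add: abs_mult)
      then show ?thesis
        unfolding L_def abs_le_iff by linarith
    qed
    then have "(\<lambda>i. k$i) \<in> Pi\<^sub>E UNIV (\<lambda>_. {-L..L})"
      using v by (auto simp: dyadic_index_def)
    then show "k \<in> vec_lambda ` (Pi\<^sub>E UNIV (\<lambda>_. {-L..L}))"
      by (metis image_eqI vec_lambda_eta)
  qed
  moreover have "finite (vec_lambda ` (Pi\<^sub>E UNIV (\<lambda>_. {-L..L})))"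
    by (intro finite_imageI finite_PiE) auto
  ultimately show ?thesis by (rule finite_subset)
qed

lemma dyadic_cell_sets:
  fixes S :: "(real^'n) set"
  assumes "S \<in> sets borel"
  shows "dyadic_cell S n k \<in> sets borel"
proof -
  have "dyadic_cell S n k = S \<inter> (\<Inter>i. {v::real^'n. real_of_int (k$i) \<le> 2^n * v$i \<and> 2^n * v$i < real_of_int (k$i) + 1})"
    by (auto simp: dyadic_cell_def dyadic_index_def vec_eq_iff floor_eq_iff)
  also have "\<dots> \<in> sets borel"
    using assms by measurable
  finally show ?thesis .
qed

lemma dyadic_index_mem_image_cell_iff:
  assumes "n \<le> n'" "v \<in> S"
  shows "dyadic_index n' v \<in> dyadic_index n' ` dyadic_cell S n k \<longleftrightarrow> dyadic_index n v = k"
proof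
  assume "dyadic_index n' v \<in> dyadic_index n' ` dyadic_cell S n k"
  then obtain u where "dyadic_index n u = k" "dyadic_index n' v = dyadic_index n' u"
    by (auto simp: dyadic_cell_def)
  then show "dyadic_index n v = k"
    using dyadic_index_coarsen[OF assms(1)] by metis
next
  assume "dyadic_index n v = k"
  then show "dyadic_index n' v \<in> dyadic_index n' ` dyadic_cell S n k"
    using assms(2) by (auto simp: dyadic_cell_def)
qed

lemma sum_indicator_dyadic_cell:
  assumes "finite (dyadic_index n ` S)"
  shows "(\<Sum>k\<in>dyadic_index n ` S. c k * indicator (dyadic_cell S n k) v)
           = (if v \<in> S then c (dyadic_index n v) else (0::real))"
proof -
  have "(\<Sum>k\<in>dyadic_index n ` S. c k * indicator (dyadic_cell S n k) v)
      = (\<Sum>k\<in>dyadic_index n ` S. if v \<in> S \<and> dyadic_index n v = k then c k else 0)"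
    by (intro sum.cong) (auto simp: dyadic_cell_def)
  then show ?thesis
    using assms by (simp add: sum.delta')
qed

lemma indicator_dyadic_cell_split:
  assumes "n \<le> n'" "bounded S"
  shows "indicator (dyadic_cell S n k) v
           = (\<Sum>k'\<in>dyadic_index n' ` dyadic_cell S n k. indicator (dyadic_cell S n' k') v :: real)"
proof (cases "v \<in> S")
  case True
  have "finite (dyadic_index n' ` dyadic_cell S n k)"
    using finite_dyadic_index_image[of "dyadic_cell S n k"] assms(2)
    by (auto simp: dyadic_cell_def intro: bounded_subset)
  then have "(\<Sum>k'\<in>dyadic_index n' ` dyadic_cell S n k. indicator (dyadic_cell S n' k') v :: real)
      = (if dyadic_index n' v \<in> dyadic_index n' ` dyadic_cell S n k then 1 else 0)"
    using True by (simp add: indicator_def dyadic_cell_def sum.delta' eq_commute)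
  then show ?thesis
    using True dyadic_index_mem_image_cell_iff[OF assms(1) True]
    by (simp add: indicator_def dyadic_cell_def)
qed (simp add: dyadic_cell_def)

lemma indicator_dyadic_cell_mult:
  assumes "n0 \<le> n"
  shows "indicator (dyadic_cell S n k) v * indicator (dyadic_cell S n0 k0) v
    = (if k \<in> dyadic_index n ` dyadic_cell S n0 k0 then indicator (dyadic_cell S n k) v else (0::real))"
proof (cases "v \<in> S \<and> dyadic_index n v = k")
  case True
  then show ?thesis
    using assms dyadic_index_mem_image_cell_iff[of n0 n v S k0] by (auto simp: dyadic_cell_def)
qed (auto simp: dyadic_cell_def)

lemma dyadic_oscillation_less:
  fixes h :: "real^'n \<Rightarrow> real"
  assumes "compact S" "continuous_on S h" "\<epsilon> > 0"
  obtains n where "\<And>u v. u \<in> S \<Longrightarrow> v \<in> S \<Longrightarrow> dyadic_index n u = dyadic_index n v \<Longrightarrow> \<bar>h u - h v\<bar> < \<epsilon>"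
proof -
  obtain \<delta> where \<delta>: "\<delta> > 0" "\<And>u v. u \<in> S \<Longrightarrow> v \<in> S \<Longrightarrow> dist u v < \<delta> \<Longrightarrow> dist (h u) (h v) < \<epsilon>"
    using compact_uniformly_continuous[OF assms(2,1)] assms(3)
    unfolding uniformly_continuous_on_def by metis
  obtain n where "real CARD('n) / \<delta> < 2^n"
    using real_arch_pow[of 2 "real CARD('n) / \<delta>"] by auto
  then have "real CARD('n) / 2^n < \<delta>"
    using \<delta>(1) by (simp add: field_simps)
  then show ?thesis
    using \<delta>(2) dist_le_if_dyadic_index_eq by (intro that[of n]) (force simp: dist_real_def)
qed

lemma (in prob_space) AE_dyadic_frequencies_tendsto:
  fixes W :: "nat \<Rightarrow> 'a \<Rightarrow> real^'n"
  assumes W: "\<And>j. j \<ge> 1 \<Longrightarrow> W j \<in> M \<rightarrow>\<^sub>M borel"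
    and indep: "indep_vars (\<lambda>_. borel) W {1..}"
    and distr: "\<And>j. j \<ge> 1 \<Longrightarrow> distr M borel (W j) = \<mu>"
    and S: "S \<in> sets borel"
  shows "AE \<omega> in M. \<forall>n k. prefix_mean (\<lambda>j. indicator (dyadic_cell S n k) (W j \<omega>))
                              \<longlonglongrightarrow> measure \<mu> (dyadic_cell S n k)"
proof -
  have space: "space \<mu> = UNIV"
    using distr[of 1] by auto
  have "AE \<omega> in M. prefix_mean (\<lambda>j. indicator (dyadic_cell S n k) (W j \<omega>))
          \<longlonglongrightarrow> integral\<^sup>L \<mu> (indicator (dyadic_cell S n k))" for n k
    using dyadic_cell_sets[OF S]
    by (intro strong_law_bounded[OF W indep distr, where B=1]) (auto simp: indicator_def)
  then show ?thesis
    by (simp add: AE_all_countable space)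
qed

section \<open>Limit densities of weighted samples\<close>

lemma convergent_diagonal_subseq:
  fixes u :: "'i::countable \<Rightarrow> nat \<Rightarrow> real"
  assumes "\<And>i. bounded (range (u i))"
  obtains r where "strict_mono r" "\<And>i. convergent (\<lambda>m. u i (r m))"
proof -
  interpret subseqs "\<lambda>n s. convergent (\<lambda>m. u (from_nat n) (s m))"
  proof
    fix n and s :: "nat \<Rightarrow> nat"
    have "bounded (range (\<lambda>m. u (from_nat n) (s m)))"
      by (rule bounded_subset[OF assms]) auto
    then obtain l r where "strict_mono r" "((\<lambda>m. u (from_nat n) (s m)) \<circ> r) \<longlonglongrightarrow> l"
      using bounded_imp_convergent_subsequence by blast
    then show "\<exists>r. strict_mono r \<and> convergent (\<lambda>m. u (from_nat n) ((s \<circ> r) m))"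
      by (auto simp: convergent_def o_def)
  qed
  have "convergent (\<lambda>m. u i (diagseq m))" for i
  proof -
    have "convergent (\<lambda>m. u (from_nat (to_nat i)) ((diagseq \<circ> (+) (Suc (to_nat i))) m))"
    proof (rule diagseq_holds)
      fix r s n
      assume "strict_mono (r :: nat \<Rightarrow> nat)" "convergent (\<lambda>m. u (from_nat n) (s m))"
      from convergent_subseq_convergent[OF this(2,1)]
      show "convergent (\<lambda>m. u (from_nat n) ((s \<circ> r) m))" by (simp add: o_def)
    qed
    then show ?thesis
      using convergent_ignore_initial_segment[of "\<lambda>m. u i (diagseq m)" "Suc (to_nat i)"]
      by (simp add: ac_simps)
  qed
  then show ?thesis
    using subseq_diagseq that by blast
qed

lemma abs_le_square_div_add:
  fixes x e :: real
  assumes "e > 0"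
  shows "\<bar>x\<bar> \<le> x\<^sup>2 / e + e / 4"
proof -
  have "0 \<le> (\<bar>x\<bar> - e / 2)\<^sup>2" by simp
  then have "e * \<bar>x\<bar> \<le> x\<^sup>2 + e\<^sup>2 / 4"
    by (simp add: power2_eq_square algebra_simps)
  then show ?thesis
    using assms by (simp add: field_simps power2_eq_square)
qed

lemma (in finite_measure) integrable_mult_bounded:
  fixes f g :: "'a \<Rightarrow> real"
  assumes "f \<in> borel_measurable M" "g \<in> borel_measurable M"
    and "AE x in M. \<bar>f x\<bar> \<le> A" "AE x in M. \<bar>g x\<bar> \<le> B"
  shows "integrable M (\<lambda>x. f x * g x)"
proof (rule integrable_const_bound[where B="A * B"])
  show "AE x in M. norm (f x * g x) \<le> A * B"
    using assms(3,4) by eventually_elim (auto simp: abs_mult intro: mult_mono order.trans[OF abs_ge_zero])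
qed (use assms(1,2) in simp)

locale dyadic_equidistributed_sample = prob_space \<pi>0
  for \<pi>0 :: "(real^'p) measure" +
  fixes \<Omega> :: "(real^'p) set" and w :: "nat \<Rightarrow> real^'p" and a :: "nat \<Rightarrow> real" and C :: real
  assumes sets_eq_borel: "sets \<pi>0 = sets borel"
    and compact_Omega: "compact \<Omega>"
    and samples_in: "\<And>j. j \<ge> 1 \<Longrightarrow> w j \<in> \<Omega>"
    and weights_le: "\<And>j. j \<ge> 1 \<Longrightarrow> \<bar>a j\<bar> \<le> C"
    and frequency_tendsto: "\<And>n k. prefix_mean (\<lambda>j. indicator (dyadic_cell \<Omega> n k) (w j))
                                     \<longlonglongrightarrow> measure \<pi>0 (dyadic_cell \<Omega> n k)"
begin

abbreviation cell :: "nat \<Rightarrow> int^'p \<Rightarrow> (real^'p) set" where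
  "cell \<equiv> dyadic_cell \<Omega>"

abbreviation cell_indices :: "nat \<Rightarrow> (int^'p) set" where
  "cell_indices n \<equiv> dyadic_index n ` \<Omega>"

lemma C_nonneg: "0 \<le> C"
  using weights_le[of 1] by simp

lemma space_eq: "space \<pi>0 = UNIV"
  using sets_eq_imp_space_eq[OF sets_eq_borel] by simp

lemma cell_sets [measurable]: "cell n k \<in> sets \<pi>0"
  using dyadic_cell_sets[of \<Omega>] compact_Omega sets_eq_borel by (simp add: compact_imp_closed)

lemma finite_cell_indices: "finite (cell_indices n)"
  using finite_dyadic_index_image compact_imp_bounded[OF compact_Omega] .

definition weighted_mass :: "nat \<Rightarrow> int^'p \<Rightarrow> nat \<Rightarrow> real" where
  "weighted_mass n k = prefix_mean (\<lambda>j. a j * indicator (cell n k) (w j))"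

lemma abs_weighted_mass_le_frequency:
  "\<bar>weighted_mass n k m\<bar> \<le> C * prefix_mean (\<lambda>j. indicator (cell n k) (w j)) m"
  unfolding weighted_mass_def prefix_mean_cmult[symmetric]
  by (intro abs_prefix_mean_le) (auto simp: abs_mult indicator_def weights_le)

lemma abs_weighted_mass_le: "\<bar>weighted_mass n k m\<bar> \<le> C"
  unfolding weighted_mass_def
  by (rule order.trans[OF abs_prefix_mean_le prefix_mean_const_le[OF C_nonneg]])
     (auto simp: abs_mult indicator_def weights_le C_nonneg)

lemma weighted_mass_split:
  assumes "n \<le> n'"
  shows "weighted_mass n k m = (\<Sum>k'\<in>dyadic_index n' ` cell n k. weighted_mass n' k' m)"
proof -
  have "(\<lambda>j. a j * indicator (cell n k) (w j))
      = (\<lambda>j. \<Sum>k'\<in>dyadic_index n' ` cell n k. a j * indicator (cell n' k') (w j))"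
    using indicator_dyadic_cell_split[OF assms compact_imp_bounded[OF compact_Omega]]
    by (simp add: sum_distrib_left)
  then show ?thesis
    unfolding weighted_mass_def by (simp add: prefix_mean_sum)
qed

definition mass_subseq :: "nat \<Rightarrow> nat" where
  "mass_subseq = (SOME r. strict_mono r \<and> (\<forall>n k. convergent (\<lambda>m. weighted_mass n k (r m))))"

lemma mass_subseq:
  "strict_mono mass_subseq" "convergent (\<lambda>m. weighted_mass n k (mass_subseq m))"
proof -
  have "bounded (range (weighted_mass n k))" for n k
    using abs_weighted_mass_le by (intro boundedI[where B=C]) auto
  then obtain r where "strict_mono r" "\<And>nk. convergent (\<lambda>m. weighted_mass (fst nk) (snd nk) (r m))"
    using convergent_diagonal_subseq[of "\<lambda>nk. weighted_mass (fst nk) (snd nk)"] by blast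
  then have "\<exists>r. strict_mono r \<and> (\<forall>n k. convergent (\<lambda>m. weighted_mass n k (r m)))"
    by (metis fst_conv snd_conv)
  from someI_ex[OF this]
  show "strict_mono mass_subseq" "convergent (\<lambda>m. weighted_mass n k (mass_subseq m))"
    unfolding mass_subseq_def by auto
qed

definition limit_mass :: "nat \<Rightarrow> int^'p \<Rightarrow> real" where
  "limit_mass n k = lim (\<lambda>m. weighted_mass n k (mass_subseq m))"

lemma weighted_mass_tendsto: "(\<lambda>m. weighted_mass n k (mass_subseq m)) \<longlonglongrightarrow> limit_mass n k"
  using mass_subseq(2) unfolding limit_mass_def convergent_LIMSEQ_iff .

lemma abs_limit_mass_le: "\<bar>limit_mass n k\<bar> \<le> C * measure \<pi>0 (cell n k)"
proof (rule LIMSEQ_le)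
  show "(\<lambda>m. \<bar>weighted_mass n k (mass_subseq m)\<bar>) \<longlonglongrightarrow> \<bar>limit_mass n k\<bar>"
    by (intro tendsto_rabs weighted_mass_tendsto)
  have "(\<lambda>m. prefix_mean (\<lambda>j. indicator (cell n k) (w j)) (mass_subseq m)) \<longlonglongrightarrow> measure \<pi>0 (cell n k)"
    using LIMSEQ_subseq_LIMSEQ[OF frequency_tendsto mass_subseq(1)] by (simp add: o_def)
  then show "(\<lambda>m. C * prefix_mean (\<lambda>j. indicator (cell n k) (w j)) (mass_subseq m))
               \<longlonglongrightarrow> C * measure \<pi>0 (cell n k)"
    by (rule tendsto_mult_left)
qed (auto intro: abs_weighted_mass_le_frequency)

lemma limit_mass_split:
  assumes "n \<le> n'"
  shows "limit_mass n k = (\<Sum>k'\<in>dyadic_index n' ` cell n k. limit_mass n' k')"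
proof -
  have "(\<lambda>m. weighted_mass n k (mass_subseq m)) \<longlonglongrightarrow> (\<Sum>k'\<in>dyadic_index n' ` cell n k. limit_mass n' k')"
    unfolding weighted_mass_split[OF assms] by (intro tendsto_sum weighted_mass_tendsto)
  then show ?thesis
    using weighted_mass_tendsto LIMSEQ_unique by blast
qed

lemma limit_mass_div_mult: "limit_mass n k / measure \<pi>0 (cell n k) * measure \<pi>0 (cell n k) = limit_mass n k"
  using abs_limit_mass_le[of n k] by (cases "measure \<pi>0 (cell n k) = 0") auto

lemma abs_limit_mass_div_le: "\<bar>limit_mass n k / measure \<pi>0 (cell n k)\<bar> \<le> C"
proof (cases "measure \<pi>0 (cell n k) = 0")
  case False
  then have "measure \<pi>0 (cell n k) > 0"
    using measure_nonneg[of \<pi>0 "cell n k"] by linarith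
  then show ?thesis
    using abs_limit_mass_le[of n k] by (simp add: abs_divide pos_divide_le_eq)
qed (simp add: C_nonneg)

text \<open>On a null cell the quotient is 0 / 0 = 0; this is harmless because the limit mass of a null
  cell vanishes as well.\<close>
definition cell_density :: "nat \<Rightarrow> real^'p \<Rightarrow> real" where
  "cell_density n v = (\<Sum>k\<in>cell_indices n. limit_mass n k / measure \<pi>0 (cell n k) * indicator (cell n k) v)"

lemma cell_density_eq:
  "cell_density n v = (if v \<in> \<Omega> then limit_mass n (dyadic_index n v) / measure \<pi>0 (cell n (dyadic_index n v)) else 0)"
  unfolding cell_density_def by (rule sum_indicator_dyadic_cell[OF finite_cell_indices])

lemma abs_cell_density_le: "\<bar>cell_density n v\<bar> \<le> C"
  using abs_limit_mass_div_le C_nonneg by (simp add: cell_density_eq)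

lemma cell_density_measurable [measurable]: "cell_density n \<in> borel_measurable \<pi>0"
  unfolding cell_density_def by measurable

lemma integral_sum_cells:
  fixes f :: "real^'p \<Rightarrow> real" and B :: real
  assumes "f \<in> borel_measurable \<pi>0" "AE v in \<pi>0. \<bar>f v\<bar> \<le> B"
  shows "(\<integral>v. (\<Sum>k\<in>K. c k * (f v * indicator (cell n k) v)) \<partial>\<pi>0)
           = (\<Sum>k\<in>K. c k * (\<integral>v. f v * indicator (cell n k) v \<partial>\<pi>0))"
proof -
  have "integrable \<pi>0 (\<lambda>v. f v * indicator (cell n k) v)" for k
    by (rule integrable_mult_bounded[where A=B and B=1]) (use assms in \<open>auto simp: indicator_def\<close>)
  then show ?thesis
    by (simp add: Bochner_Integration.integral_sum)
qed

lemma integral_cell_density_indicator: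
  assumes "n0 \<le> n"
  shows "(\<integral>v. cell_density n v * indicator (cell n0 k0) v \<partial>\<pi>0) = limit_mass n0 k0"
proof -
  let ?D = "dyadic_index n ` cell n0 k0"
  have D_sub: "?D \<subseteq> cell_indices n"
    by (auto simp: dyadic_cell_def)
  have pointwise: "cell_density n v * indicator (cell n0 k0) v
      = (\<Sum>k\<in>?D. limit_mass n k / measure \<pi>0 (cell n k) * indicator (cell n k) v)" for v
  proof -
    have "cell_density n v * indicator (cell n0 k0) v
        = (\<Sum>k\<in>cell_indices n. if k \<in> ?D then limit_mass n k / measure \<pi>0 (cell n k) * indicator (cell n k) v else 0)"
      unfolding cell_density_def sum_distrib_right mult.assoc indicator_dyadic_cell_mult[OF assms]
      by (intro sum.cong) auto
    also have "\<dots> = (\<Sum>k\<in>?D. limit_mass n k / measure \<pi>0 (cell n k) * indicator (cell n k) v)"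
      using D_sub by (simp add: sum.inter_restrict[OF finite_cell_indices, symmetric] Int_absorb1)
    finally show ?thesis .
  qed
  have "(\<integral>v. cell_density n v * indicator (cell n0 k0) v \<partial>\<pi>0)
      = (\<integral>v. (\<Sum>k\<in>?D. limit_mass n k / measure \<pi>0 (cell n k) * indicator (cell n k) v) \<partial>\<pi>0)"
    by (simp only: pointwise)
  also have "\<dots> = (\<Sum>k\<in>?D. limit_mass n k / measure \<pi>0 (cell n k) * measure \<pi>0 (cell n k))"
    by (subst Bochner_Integration.integral_sum)
       (auto intro!: integrable_mult_right integrable_real_indicator simp: space_eq less_top[symmetric])
  also have "\<dots> = limit_mass n0 k0"
    by (simp only: limit_mass_div_mult limit_mass_split[OF assms])
  finally show ?thesis .
qed

definition energy :: "nat \<Rightarrow> real" where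
  "energy n = (\<integral>v. (cell_density n v)\<^sup>2 \<partial>\<pi>0)"

text \<open>The coarser density is the conditional expectation of the finer one: the densities form a
  martingale, whose increments are orthogonal in L2.\<close>

lemma integral_cell_density_mult:
  assumes "n0 \<le> n"
  shows "(\<integral>v. cell_density n0 v * cell_density n v \<partial>\<pi>0) = energy n0"
proof -
  have *: "(\<integral>v. cell_density n0 v * cell_density n v \<partial>\<pi>0)
      = (\<Sum>k\<in>cell_indices n0. limit_mass n0 k / measure \<pi>0 (cell n0 k) * limit_mass n0 k)"
    if "n0 \<le> n" for n
  proof -
    have "(\<integral>v. cell_density n0 v * cell_density n v \<partial>\<pi>0)
        = (\<integral>v. (\<Sum>k\<in>cell_indices n0. limit_mass n0 k / measure \<pi>0 (cell n0 k)
                  * (cell_density n v * indicator (cell n0 k) v)) \<partial>\<pi>0)"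
      unfolding cell_density_def[of n0] sum_distrib_right by (simp add: mult_ac)
    also have "\<dots> = (\<Sum>k\<in>cell_indices n0. limit_mass n0 k / measure \<pi>0 (cell n0 k)
                  * (\<integral>v. cell_density n v * indicator (cell n0 k) v \<partial>\<pi>0))"
      by (rule integral_sum_cells[where B=C]) (auto intro: abs_cell_density_le)
    finally show ?thesis
      by (simp add: integral_cell_density_indicator[OF that])
  qed
  show ?thesis
    using *[OF assms] *[of n0] by (simp add: energy_def power2_eq_square)
qed

lemma integrable_cell_density_mult: "integrable \<pi>0 (\<lambda>v. cell_density n v * cell_density n' v)"
  by (intro integrable_mult_bounded[where A=C and B=C]) (auto intro: abs_cell_density_le)

lemma integrable_sq_diff_cell_density: "integrable \<pi>0 (\<lambda>v. (cell_density n v - cell_density n' v)\<^sup>2)"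
  unfolding power2_eq_square right_diff_distrib left_diff_distrib
  by (intro Bochner_Integration.integrable_diff integrable_cell_density_mult)

lemma integral_sq_diff_cell_density:
  assumes "n0 \<le> n"
  shows "(\<integral>v. (cell_density n v - cell_density n0 v)\<^sup>2 \<partial>\<pi>0) = energy n - energy n0"
proof -
  have "(\<lambda>v. (cell_density n v - cell_density n0 v)\<^sup>2)
      = (\<lambda>v. cell_density n v * cell_density n v - 2 * (cell_density n0 v * cell_density n v)
               + cell_density n0 v * cell_density n0 v)"
    by (auto simp: power2_eq_square algebra_simps)
  then show ?thesis
    using integral_cell_density_mult[OF assms] integral_cell_density_mult[of n n]
      integral_cell_density_mult[of n0 n0] integrable_cell_density_mult
    by simp
qed

lemma energy_incseq: "incseq energy"
proof (rule incseq_SucI)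
  fix n
  have "0 \<le> (\<integral>v. (cell_density (Suc n) v - cell_density n v)\<^sup>2 \<partial>\<pi>0)"
    by simp
  then show "energy n \<le> energy (Suc n)"
    using integral_sq_diff_cell_density[of n "Suc n"] by simp
qed

lemma energy_le: "energy n \<le> C\<^sup>2"
proof -
  have "energy n \<le> (\<integral>v. C\<^sup>2 \<partial>\<pi>0)"
    unfolding energy_def
  proof (rule integral_mono)
    show "integrable \<pi>0 (\<lambda>v. (cell_density n v)\<^sup>2)"
      using integrable_cell_density_mult[of n n] by (simp add: power2_eq_square)
    show "(cell_density n v)\<^sup>2 \<le> C\<^sup>2" for v
      using abs_cell_density_le[of n v] by (metis power2_abs power_mono abs_ge_zero)
  qed simp
  then show ?thesis by (simp add: prob_space)
qed

lemma integrable_cell_density: "integrable \<pi>0 (cell_density n)"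
  by (rule integrable_const_bound[where B=C]) (auto intro: abs_cell_density_le)

lemma cell_density_L1_Cauchy:
  assumes "e > 0"
  shows "\<exists>N. \<forall>i\<ge>N. \<forall>j\<ge>N. (LINT v|\<pi>0. norm (cell_density i v - cell_density j v)) < e"
proof -
  have "energy \<longlonglongrightarrow> (SUP i. energy i)"
    by (rule LIMSEQ_incseq_SUP[OF bdd_aboveI2[where M="C\<^sup>2"] energy_incseq]) (rule energy_le)
  then have "Cauchy energy"
    by (rule LIMSEQ_imp_Cauchy)
  moreover have "e * e / 4 > 0"
    using assms by simp
  ultimately obtain N where N: "\<forall>i\<ge>N. \<forall>j\<ge>N. norm (energy i - energy j) < e * e / 4"
    by (blast dest: CauchyD)
  have sq: "(\<integral>v. (cell_density i v - cell_density j v)\<^sup>2 \<partial>\<pi>0) \<le> \<bar>energy i - energy j\<bar>" for i j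
  proof (cases "j \<le> i")
    case False
    have "(\<lambda>v. (cell_density i v - cell_density j v)\<^sup>2) = (\<lambda>v. (cell_density j v - cell_density i v)\<^sup>2)"
      by (simp add: power2_commute)
    then show ?thesis
      using False integral_sq_diff_cell_density[of i j] by simp
  qed (simp add: integral_sq_diff_cell_density)
  have "(LINT v|\<pi>0. norm (cell_density i v - cell_density j v)) < e" if "i \<ge> N" "j \<ge> N" for i j
  proof -
    have "(LINT v|\<pi>0. norm (cell_density i v - cell_density j v))
        \<le> (LINT v|\<pi>0. (cell_density i v - cell_density j v)\<^sup>2 / e + e / 4)"
      using assms integrable_sq_diff_cell_density integrable_cell_density
      by (intro integral_mono) (simp_all add: abs_le_square_div_add)
    also have "\<dots> = (\<integral>v. (cell_density i v - cell_density j v)\<^sup>2 \<partial>\<pi>0) / e + e / 4"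
      using integrable_sq_diff_cell_density by (simp add: prob_space)
    also have "\<dots> < e * e / 4 / e + e / 4"
    proof -
      have "(\<integral>v. (cell_density i v - cell_density j v)\<^sup>2 \<partial>\<pi>0) < e * e / 4"
        using sq[of i j] N that by fastforce
      then show ?thesis
        using assms by (intro add_strict_right_mono divide_strict_right_mono) auto
    qed
    also have "\<dots> < e"
      using assms by simp
    finally show ?thesis .
  qed
  then show ?thesis by blast
qed

definition density_subseq :: "nat \<Rightarrow> nat" where
  "density_subseq = (SOME r. strict_mono r \<and> (AE v in \<pi>0. Cauchy (\<lambda>i. cell_density (r i) v)))"

lemma density_subseq:
  "strict_mono density_subseq" "AE v in \<pi>0. Cauchy (\<lambda>i. cell_density (density_subseq i) v)"
proof -
  obtain r where "strict_mono r" "AE v in \<pi>0. Cauchy (\<lambda>i. cell_density (r i) v)"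
    using cauchy_L1_AE_cauchy_subseq[OF integrable_cell_density cell_density_L1_Cauchy] by blast
  then have "\<exists>r. strict_mono r \<and> (AE v in \<pi>0. Cauchy (\<lambda>i. cell_density (r i) v))"
    by blast
  from someI_ex[OF this]
  show "strict_mono density_subseq" "AE v in \<pi>0. Cauchy (\<lambda>i. cell_density (density_subseq i) v)"
    unfolding density_subseq_def by auto
qed

definition limit_density :: "real^'p \<Rightarrow> real" where
  "limit_density v = lim (\<lambda>i. cell_density (density_subseq i) v)"

lemma limit_density_measurable [measurable]: "limit_density \<in> borel_measurable \<pi>0"
  unfolding limit_density_def by measurable

lemma AE_cell_density_tendsto:
  "AE v in \<pi>0. (\<lambda>i. cell_density (density_subseq i) v) \<longlonglongrightarrow> limit_density v"
  using density_subseq(2)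
  by eventually_elim (simp add: limit_density_def Cauchy_convergent_iff convergent_LIMSEQ_iff)

lemma AE_abs_limit_density_le: "AE v in \<pi>0. \<bar>limit_density v\<bar> \<le> C"
  using AE_cell_density_tendsto
proof eventually_elim
  case (elim v)
  then have "(\<lambda>i. \<bar>cell_density (density_subseq i) v\<bar>) \<longlonglongrightarrow> \<bar>limit_density v\<bar>"
    by (rule tendsto_rabs)
  then show ?case
    by (rule LIMSEQ_le_const2) (auto intro: abs_cell_density_le)
qed

lemma integrable_limit_density_mult:
  assumes "f \<in> borel_measurable \<pi>0" "\<And>v. \<bar>f v\<bar> \<le> B"
  shows "integrable \<pi>0 (\<lambda>v. limit_density v * f v)"
  using assms AE_abs_limit_density_le by (intro integrable_mult_bounded) auto

lemma integral_limit_density_indicator: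
  "(\<integral>v. limit_density v * indicator (cell n k) v \<partial>\<pi>0) = limit_mass n k"
proof -
  have lim: "(\<lambda>i. \<integral>v. cell_density (density_subseq i) v * indicator (cell n k) v \<partial>\<pi>0)
          \<longlonglongrightarrow> (\<integral>v. limit_density v * indicator (cell n k) v \<partial>\<pi>0)"
  proof (rule integral_dominated_convergence[where w="\<lambda>_. C"])
    show "AE v in \<pi>0. (\<lambda>i. cell_density (density_subseq i) v * indicator (cell n k) v)
            \<longlonglongrightarrow> limit_density v * indicator (cell n k) v"
      using AE_cell_density_tendsto by eventually_elim (rule tendsto_mult_right)
    show "AE v in \<pi>0. norm (cell_density (density_subseq i) v * indicator (cell n k) v) \<le> C" for i
      using abs_cell_density_le C_nonneg by (auto simp: indicator_def)
  qed simp_all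
  have "(\<lambda>i. \<integral>v. cell_density (density_subseq i) v * indicator (cell n k) v \<partial>\<pi>0) \<longlonglongrightarrow> limit_mass n k"
  proof (rule tendsto_eventually, rule eventually_sequentiallyI)
    fix i assume "n \<le> i"
    then have "n \<le> density_subseq i"
      using seq_suble[OF density_subseq(1), of i] by simp
    then show "(\<integral>v. cell_density (density_subseq i) v * indicator (cell n k) v \<partial>\<pi>0) = limit_mass n k"
      by (rule integral_cell_density_indicator)
  qed
  then show ?thesis
    by (rule LIMSEQ_unique[OF lim])
qed

definition cell_point :: "nat \<Rightarrow> int^'p \<Rightarrow> real^'p" where
  "cell_point n k = (SOME v. v \<in> cell n k)"

lemma cell_point_in: "v \<in> \<Omega> \<Longrightarrow> cell_point n (dyadic_index n v) \<in> cell n (dyadic_index n v)"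
  unfolding cell_point_def by (rule someI[of _ v]) (simp add: dyadic_cell_def)

definition step_approx :: "nat \<Rightarrow> (real^'p \<Rightarrow> real) \<Rightarrow> real^'p \<Rightarrow> real" where
  "step_approx n h v = (\<Sum>k\<in>cell_indices n. h (cell_point n k) * indicator (cell n k) v)"

lemma step_approx_eq:
  "step_approx n h v = (if v \<in> \<Omega> then h (cell_point n (dyadic_index n v)) else 0)"
  unfolding step_approx_def by (rule sum_indicator_dyadic_cell[OF finite_cell_indices])

lemma step_approx_measurable [measurable]: "step_approx n h \<in> borel_measurable \<pi>0"
  unfolding step_approx_def by measurable

lemma weighted_step_mean_tendsto:
  "(\<lambda>m. prefix_mean (\<lambda>j. a j * step_approx n h (w j)) (mass_subseq m))
     \<longlonglongrightarrow> (\<integral>v. limit_density v * step_approx n h v \<partial>\<pi>0)"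
proof -
  have "(\<lambda>j. a j * step_approx n h (w j))
      = (\<lambda>j. \<Sum>k\<in>cell_indices n. h (cell_point n k) * (a j * indicator (cell n k) (w j)))"
    by (simp add: step_approx_def sum_distrib_left mult_ac)
  then have mean: "prefix_mean (\<lambda>j. a j * step_approx n h (w j)) m
      = (\<Sum>k\<in>cell_indices n. h (cell_point n k) * weighted_mass n k m)" for m
    by (simp add: prefix_mean_sum prefix_mean_cmult weighted_mass_def)
  have "(\<integral>v. limit_density v * step_approx n h v \<partial>\<pi>0)
      = (\<integral>v. (\<Sum>k\<in>cell_indices n. h (cell_point n k) * (limit_density v * indicator (cell n k) v)) \<partial>\<pi>0)"
    by (simp add: step_approx_def sum_distrib_left mult_ac)
  also have "\<dots> = (\<Sum>k\<in>cell_indices n. h (cell_point n k) * limit_mass n k)"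
    using integral_sum_cells[OF limit_density_measurable AE_abs_limit_density_le]
    by (simp add: integral_limit_density_indicator)
  finally have integral: "(\<integral>v. limit_density v * step_approx n h v \<partial>\<pi>0)
      = (\<Sum>k\<in>cell_indices n. h (cell_point n k) * limit_mass n k)" .
  show ?thesis
    unfolding mean integral by (intro tendsto_sum tendsto_mult_left weighted_mass_tendsto)
qed

lemma abs_limit_sub_integral_step_le:
  assumes L: "prefix_mean (\<lambda>j. a j * h (w j)) \<longlonglongrightarrow> L"
    and close: "\<And>v. v \<in> \<Omega> \<Longrightarrow> \<bar>h v - step_approx n h v\<bar> \<le> \<epsilon>"
  shows "\<bar>L - (\<integral>v. limit_density v * step_approx n h v \<partial>\<pi>0)\<bar> \<le> C * \<epsilon>"
proof (rule LIMSEQ_le_const2)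
  have "(\<lambda>m. prefix_mean (\<lambda>j. a j * h (w j)) (mass_subseq m)) \<longlonglongrightarrow> L"
    using LIMSEQ_subseq_LIMSEQ[OF L mass_subseq(1)] by (simp add: o_def)
  then show "(\<lambda>m. \<bar>prefix_mean (\<lambda>j. a j * h (w j)) (mass_subseq m)
                 - prefix_mean (\<lambda>j. a j * step_approx n h (w j)) (mass_subseq m)\<bar>)
               \<longlonglongrightarrow> \<bar>L - (\<integral>v. limit_density v * step_approx n h v \<partial>\<pi>0)\<bar>"
    by (intro tendsto_rabs tendsto_diff weighted_step_mean_tendsto)
  have "\<bar>a j * h (w j) - a j * step_approx n h (w j)\<bar> \<le> C * \<epsilon>" if "j \<ge> 1" for j
    unfolding right_diff_distrib[symmetric] abs_mult
    using weights_le[OF that] close[OF samples_in[OF that]] C_nonneg by (intro mult_mono) auto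
  then have "\<bar>prefix_mean (\<lambda>j. a j * h (w j)) m - prefix_mean (\<lambda>j. a j * step_approx n h (w j)) m\<bar>
               \<le> C * \<epsilon>" for m
    unfolding prefix_mean_diff[symmetric]
    using close[OF samples_in[of 1]] C_nonneg
    by (intro order.trans[OF abs_prefix_mean_le prefix_mean_const_le]) auto
  then show "\<exists>N. \<forall>m\<ge>N. \<bar>prefix_mean (\<lambda>j. a j * h (w j)) (mass_subseq m)
                 - prefix_mean (\<lambda>j. a j * step_approx n h (w j)) (mass_subseq m)\<bar> \<le> C * \<epsilon>"
    by blast
qed

lemma abs_integral_limit_density_diff_le:
  assumes "f \<in> borel_measurable \<pi>0" "g \<in> borel_measurable \<pi>0"
    and "\<And>v. \<bar>f v\<bar> \<le> B" "\<And>v. \<bar>f v - g v\<bar> \<le> \<epsilon>"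
  shows "\<bar>(\<integral>v. limit_density v * f v \<partial>\<pi>0) - (\<integral>v. limit_density v * g v \<partial>\<pi>0)\<bar> \<le> C * \<epsilon>"
proof -
  have g_le: "\<bar>g v\<bar> \<le> B + \<epsilon>" for v
    using assms(3,4)[of v] unfolding abs_le_iff by linarith
  have "(\<integral>v. limit_density v * f v \<partial>\<pi>0) - (\<integral>v. limit_density v * g v \<partial>\<pi>0)
      = (\<integral>v. limit_density v * (f v - g v) \<partial>\<pi>0)"
    using Bochner_Integration.integral_diff[OF integrable_limit_density_mult[OF assms(1,3)]
        integrable_limit_density_mult[OF assms(2) g_le]]
    by (simp add: right_diff_distrib)
  also have "\<bar>\<dots>\<bar> \<le> (\<integral>v. C * \<epsilon> \<partial>\<pi>0)"
  proof (rule integral_abs_bound[THEN order_trans], rule integral_mono_AE)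
    show "integrable \<pi>0 (\<lambda>v. \<bar>limit_density v * (f v - g v)\<bar>)"
      using assms(1,2,4) by (intro integrable_abs integrable_limit_density_mult) auto
    show "AE v in \<pi>0. \<bar>limit_density v * (f v - g v)\<bar> \<le> C * \<epsilon>"
      using AE_abs_limit_density_le
      by eventually_elim (use assms(4) in \<open>auto simp: abs_mult intro: mult_mono\<close>)
  qed simp
  finally show ?thesis
    by (simp add: prob_space)
qed

lemma limit_density_represents:
  assumes h: "continuous_on \<Omega> h" and L: "prefix_mean (\<lambda>j. a j * h (w j)) \<longlonglongrightarrow> L"
  shows "L = (LINT v:\<Omega>|\<pi>0. limit_density v * h v)"
proof -
  define g where "g v = indicator \<Omega> v * h v" for v
  have g_measurable: "g \<in> borel_measurable \<pi>0"
    using borel_measurable_continuous_on_indicator[OF _ h] compact_Omega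
    by (simp add: g_def[abs_def] measurable_cong_sets[OF sets_eq_borel refl] compact_imp_closed)
  obtain B where B: "\<And>v. v \<in> \<Omega> \<Longrightarrow> \<bar>h v\<bar> \<le> B" "B > 0"
    using compact_imp_bounded[OF compact_continuous_image[OF h compact_Omega]]
    unfolding bounded_pos by auto
  have approx: "\<bar>L - (\<integral>v. limit_density v * g v \<partial>\<pi>0)\<bar> \<le> 2 * C * \<epsilon>" if \<epsilon>: "\<epsilon> > 0" for \<epsilon>
  proof -
    obtain n where osc: "\<And>u v. u \<in> \<Omega> \<Longrightarrow> v \<in> \<Omega> \<Longrightarrow> dyadic_index n u = dyadic_index n v \<Longrightarrow> \<bar>h u - h v\<bar> < \<epsilon>"
      using dyadic_oscillation_less[OF compact_Omega h \<epsilon>] by blast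
    have close: "\<bar>h v - step_approx n h v\<bar> \<le> \<epsilon>" if "v \<in> \<Omega>" for v
      using osc[OF that, of "cell_point n (dyadic_index n v)"] cell_point_in[OF that]
      by (simp add: step_approx_eq that dyadic_cell_def)
    have "\<bar>step_approx n h v - g v\<bar> \<le> \<epsilon>" for v
      using close[of v] \<epsilon> by (cases "v \<in> \<Omega>") (auto simp: g_def step_approx_eq abs_minus_commute)
    moreover have "\<bar>step_approx n h v\<bar> \<le> B" for v
      using B cell_point_in[of v n] by (auto simp: step_approx_eq dyadic_cell_def)
    ultimately have "\<bar>(\<integral>v. limit_density v * step_approx n h v \<partial>\<pi>0) - (\<integral>v. limit_density v * g v \<partial>\<pi>0)\<bar>
        \<le> C * \<epsilon>"
      by (intro abs_integral_limit_density_diff_le g_measurable) auto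
    then show ?thesis
      using abs_limit_sub_integral_step_le[OF L close] by linarith
  qed
  have "\<bar>L - (\<integral>v. limit_density v * g v \<partial>\<pi>0)\<bar> \<le> 0"
  proof (rule field_le_epsilon)
    fix d :: real assume "d > 0"
    then have "\<bar>L - (\<integral>v. limit_density v * g v \<partial>\<pi>0)\<bar> \<le> 2 * C * (d / (2 * C + 1))"
      using C_nonneg by (intro approx) simp
    also have "\<dots> \<le> d"
      using \<open>d > 0\<close> C_nonneg by (simp add: field_simps)
    finally show "\<bar>L - (\<integral>v. limit_density v * g v \<partial>\<pi>0)\<bar> \<le> 0 + d" by simp
  qed
  then show ?thesis
    by (simp add: set_lebesgue_integral_def g_def mult_ac)
qed

end

lemma rf_norm_le_bound:
  assumes "a \<in> borel_measurable \<pi>0" "AE w in \<pi>0. \<bar>a w\<bar> \<le> C"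
    and "\<forall>x\<in>X. f x = (LINT w:\<Omega>|\<pi>0. a w * \<phi> x w)"
  shows "rf_norm \<pi>0 \<Omega> \<phi> X f \<le> ereal C"
proof -
  have "rf_norm \<pi>0 \<Omega> \<phi> X f \<le> esssup \<pi>0 (\<lambda>w. ereal \<bar>a w\<bar>)"
    unfolding rf_norm_def using assms(1,3) by (intro Inf_lower) blast
  also have "\<dots> \<le> ereal C"
    using assms(1,2) by (intro esssup_I) auto
  finally show ?thesis .
qed

lemma continuous_on_slice:
  assumes "continuous_on (X \<times> \<Omega>) (\<lambda>(x, w). \<phi> x w)" "x \<in> X"
  shows "continuous_on \<Omega> (\<phi> x)"
proof -
  have "continuous_on \<Omega> (\<lambda>v. (\<lambda>(x, w). \<phi> x w) (x, v))"
    by (rule continuous_on_compose2[OF assms(1)]) (auto intro!: continuous_intros simp: assms(2))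
  then show ?thesis by simp
qed

lemma (in dyadic_equidistributed_sample) limit_representable:
  assumes "continuous_on (X \<times> \<Omega>) (\<lambda>(x, v). \<phi> x v)"
    and "\<And>x. x \<in> X \<Longrightarrow> prefix_mean (\<lambda>j. a j * \<phi> x (w j)) \<longlonglongrightarrow> f x"
  shows "(\<exists>astar. astar \<in> borel_measurable \<pi>0 \<and> (AE v in \<pi>0. \<bar>astar v\<bar> \<le> C) \<and>
            (\<forall>x\<in>X. f x = (LINT v:\<Omega>|\<pi>0. astar v * \<phi> x v)))
         \<and> rf_norm \<pi>0 \<Omega> \<phi> X f \<le> ereal C"
proof -
  have rep: "\<forall>x\<in>X. f x = (LINT v:\<Omega>|\<pi>0. limit_density v * \<phi> x v)"
  proof
    fix x assume x: "x \<in> X"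
    show "f x = (LINT v:\<Omega>|\<pi>0. limit_density v * \<phi> x v)"
      using continuous_on_slice[OF assms(1) x] assms(2)[OF x] by (rule limit_density_represents)
  qed
  then show ?thesis
    using rf_norm_le_bound[OF limit_density_measurable AE_abs_limit_density_le rep]
      limit_density_measurable AE_abs_limit_density_le
    by blast
qed

theorem mainTheorem2:
  fixes \<Omega> :: "(real ^ 'p) set"
    and \<pi>0 :: "(real ^ 'p) measure"
    and \<phi> :: "real ^ 'd \<Rightarrow> real ^ 'p \<Rightarrow> real"
    and M :: "'s measure"
    and W :: "nat \<Rightarrow> 's \<Rightarrow> real ^ 'p"
    and fstar :: "real ^ 'd \<Rightarrow> real"
  assumes "compact \<Omega>"
    and "prob_space \<pi>0" and "sets \<pi>0 = sets borel"
    and "measure_support \<pi>0 = \<Omega>"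
    and "continuous_on (unit_cube \<times> \<Omega>) (\<lambda>(x, w). \<phi> x w)"
    and "bounded ((\<lambda>(x, w). \<phi> x w) ` (unit_cube \<times> \<Omega>))"
    and "prob_space M"
    and "\<And>j. j \<ge> 1 \<Longrightarrow> W j \<in> M \<rightarrow>\<^sub>M borel"
    and "prob_space.indep_vars M (\<lambda>_. borel) W {1..}"
    and "\<And>j. j \<ge> 1 \<Longrightarrow> distr M borel (W j) = \<pi>0"
    and "continuous_on unit_cube fstar"
  shows "AE \<omega> in M. \<forall>C (a :: nat \<Rightarrow> real).
           ((\<forall>j\<ge>1. \<bar>a j\<bar> \<le> C) \<and>
            (\<forall>x\<in>unit_cube.
               (\<lambda>m. (1 / real m) * (\<Sum>j=1..m. a j * \<phi> x (W j \<omega>))) \<longlonglongrightarrow> fstar x))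
           \<longrightarrow> (\<exists>astar. astar \<in> borel_measurable \<pi>0 \<and>
                  (AE w in \<pi>0. \<bar>astar w\<bar> \<le> C) \<and>
                  (\<forall>x\<in>unit_cube. fstar x = (LINT w:\<Omega>|\<pi>0. astar w * \<phi> x w)))
               \<and> rf_norm \<pi>0 \<Omega> \<phi> unit_cube fstar \<le> ereal C"
proof -
  interpret prob_space M by fact
  have AE_in_Omega: "AE v in \<pi>0. v \<in> \<Omega>"
    using AE_in_measure_support[OF assms(3)] assms(4) by simp
  have "AE \<omega> in M. \<forall>j\<ge>1. W j \<omega> \<in> \<Omega>"
    using AE_samples_in[OF assms(8,10) AE_in_Omega] .
  moreover have "AE \<omega> in M. \<forall>n k. prefix_mean (\<lambda>j. indicator (dyadic_cell \<Omega> n k) (W j \<omega>))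
                                      \<longlonglongrightarrow> measure \<pi>0 (dyadic_cell \<Omega> n k)"
    using assms(1) by (intro AE_dyadic_frequencies_tendsto assms(8-10)) (simp_all add: compact_imp_closed)
  ultimately show ?thesis
  proof eventually_elim
    case (elim \<omega>)
    show ?case
    proof (intro allI impI)
      fix C and a :: "nat \<Rightarrow> real"
      assume hyp: "(\<forall>j\<ge>1. \<bar>a j\<bar> \<le> C) \<and>
        (\<forall>x\<in>unit_cube. (\<lambda>m. (1 / real m) * (\<Sum>j=1..m. a j * \<phi> x (W j \<omega>))) \<longlonglongrightarrow> fstar x)"
      interpret sample: dyadic_equidistributed_sample \<pi>0 \<Omega> "\<lambda>j. W j \<omega>" a C
        unfolding dyadic_equidistributed_sample_def dyadic_equidistributed_sample_axioms_def
        using assms(1-3) elim hyp by blast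
      show "(\<exists>astar. astar \<in> borel_measurable \<pi>0 \<and> (AE w in \<pi>0. \<bar>astar w\<bar> \<le> C) \<and>
                   (\<forall>x\<in>unit_cube. fstar x = (LINT w:\<Omega>|\<pi>0. astar w * \<phi> x w)))
              \<and> rf_norm \<pi>0 \<Omega> \<phi> unit_cube fstar \<le> ereal C"
        using hyp by (intro sample.limit_representable[OF assms(5)]) (simp add: prefix_mean_def[abs_def])
    qed
  qed
qed

end
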